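(* The function $k\mapsto T_1(k)$ is decreasing and the function $k\mapsto T_2(k)$ is increasing on $(k_0,\infty)$.
   Context: $I(u)=\tfrac12u\log u+\tfrac12(1-u)\log(1-u)$ on $[0,1]$ ($0\log0=0$). $k_0$ is the unique solution of $\frac{k_0-1}{k_0}\log(k_0-1)=1$. It is known that for every real $k>k_0$ there is a unique $\hat\theta(k)\geq0$ such that $u\mapsto\hat\theta(k)u^k-I(u)$ has exactly two global maximisers $u_1^*(\hat\theta(k),k)<u_2^*(\hat\theta(k),k)$ on $[0,1]$. Define $T_1(k)=u_1^*(\hat\theta(k),k)^k$ and $T_2(k)=u_2^*(\hat\theta(k),k)^k$. *)

theory Defs
  imports "HOL-Analysis.Analysis"
begin

definition I_fun :: "real \<Rightarrow> real" where
  "I_fun u = (if u = 0 then 0 else u * ln u) / 2 + (if u = 1 then 0 else (1 - u) * ln (1 - u)) / 2"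

definition k0 :: real where
  "k0 = (THE k. k > 1 \<and> (k - 1) / k * ln (k - 1) = 1)"

definition obj :: "real \<Rightarrow> real \<Rightarrow> real \<Rightarrow> real" where
  "obj \<theta> k u = \<theta> * u powr k - I_fun u"

definition maximisers :: "real \<Rightarrow> real \<Rightarrow> real set" where
  "maximisers \<theta> k = {u \<in> {0..1}. \<forall>v \<in> {0..1}. obj \<theta> k v \<le> obj \<theta> k u}"

definition theta_hat :: "real \<Rightarrow> real" where
  "theta_hat k = (THE \<theta>. \<theta> \<ge> 0 \<and> card (maximisers \<theta> k) = 2)"

definition u1_star :: "real \<Rightarrow> real \<Rightarrow> real" where
  "u1_star \<theta> k = Min (maximisers \<theta> k)"

definition u2_star :: "real \<Rightarrow> real \<Rightarrow> real" where
  "u2_star \<theta> k = Max (maximisers \<theta> k)"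

definition T1 :: "real \<Rightarrow> real" where
  "T1 k = u1_star (theta_hat k) k powr k"

definition T2 :: "real \<Rightarrow> real" where
  "T2 k = u2_star (theta_hat k) k powr k"

end

theory Submission
  imports Defs "HOL-Real_Asymp.Real_Asymp"
begin

(* In the variable T = u^k the objective becomes obj_T k \<theta> T = \<theta> T - I(T^(1/k)), and T1 k < T2 k are
   its two global maximisers t1 < t2 at \<theta> = theta_hat k. Let s be a global maximiser of the problem
   for some k' > k, and let E = k (obj_T k - its maximum) - k' (obj_T k' - its maximum). Then E is
   nonnegative at t1 and t2 and nonpositive at s, and E is strictly concave on [t1, t2], because the second
   derivative of T \<mapsto> k I(T^(1/k)) decreases in k wherever T^(1/k) \<ge> 1/2, which is where maximisers
   lie. Hence s is not in [t1, t2] (at an endpoint both objectives are critical, which again contradicts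
   strict concavity). For the two maximisers s1 < s2 at k', placing all maximisers on either side of
   (k-1)/k gives s1 < t2 and t1 < s2, hence s1 < t1 and t2 < s2.

   Existence and uniqueness of theta_hat k and the location of the maximisers follow from the shape of the
   critical level theta_crit k u = logit u u^(1-k) / (2k), the \<theta> at which u is a critical point. Its
   derivative has the sign of phi k u = 1/(1-u) - (k-1) logit u, which decreases and then increases, with
   minimum k - (k-1) ln (k-1) at (k-1)/k, negative exactly when k > k0. So theta_crit k increases,
   decreases and increases again, every maximiser lies on one of the two increasing branches, and the
   balanced \<theta>, where the maxima over [0, (k-1)/k] and [(k-1)/k, 1] agree, is the unique \<theta> with
   two maximisers. *)

section \<open>Monotonicity and concavity from derivatives\<close>

lemma DERIV_pos_interior_imp_less:
  fixes f :: "real \<Rightarrow> real"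
  assumes "x < y"
    and deriv: "\<And>t. x \<le> t \<Longrightarrow> t \<le> y \<Longrightarrow> (f has_real_derivative f' t) (at t)"
    and pos: "\<And>t. x < t \<Longrightarrow> t < y \<Longrightarrow> 0 < f' t"
  shows "f x < f y"
proof (rule DERIV_pos_imp_increasing_open[OF \<open>x < y\<close>])
  show "continuous_on {x..y} f"
    by (rule continuous_at_imp_continuous_on) (use DERIV_isCont[OF deriv] in auto)
  fix t assume "x < t" "t < y"
  then show "\<exists>d. (f has_real_derivative d) (at t) \<and> 0 < d"
    using deriv[of t] pos[of t] by auto
qed

lemma DERIV_neg_interior_imp_less:
  fixes f :: "real \<Rightarrow> real"
  assumes "x < y"
    and deriv: "\<And>t. x \<le> t \<Longrightarrow> t \<le> y \<Longrightarrow> (f has_real_derivative f' t) (at t)"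
    and neg: "\<And>t. x < t \<Longrightarrow> t < y \<Longrightarrow> f' t < 0"
  shows "f y < f x"
proof -
  have "- f x < - f y"
    by (rule DERIV_pos_interior_imp_less[OF \<open>x < y\<close>, where f' = "\<lambda>t. - f' t"])
       (use deriv neg in \<open>auto intro: DERIV_minus\<close>)
  then show ?thesis by simp
qed

lemma strictly_concave_pos:
  fixes E :: "real \<Rightarrow> real"
  assumes "a < b"
    and deriv: "\<And>x. a \<le> x \<Longrightarrow> x \<le> b \<Longrightarrow> (E has_real_derivative E' x) (at x)"
    and antimono: "\<And>x y. a \<le> x \<Longrightarrow> x < y \<Longrightarrow> y \<le> b \<Longrightarrow> E' y < E' x"
    and "0 \<le> E a" "0 \<le> E b" "a \<le> x" "x \<le> b"
    and crit_a: "x = a \<Longrightarrow> E' a = 0" and crit_b: "x = b \<Longrightarrow> E' b = 0"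
  shows "0 < E x"
proof -
  consider "x = a" | "x = b" | "a < x" "x < b"
    using \<open>a \<le> x\<close> \<open>x \<le> b\<close> by linarith
  then show ?thesis
  proof cases
    case 1
    have "E b < E a"
      by (rule DERIV_neg_interior_imp_less[OF \<open>a < b\<close> deriv])
         (use antimono[of a] crit_a 1 in auto)
    then show ?thesis using 1 \<open>0 \<le> E b\<close> by simp
  next
    case 2
    have "E a < E b"
      by (rule DERIV_pos_interior_imp_less[OF \<open>a < b\<close> deriv])
         (use antimono[of _ b] crit_b 2 in auto)
    then show ?thesis using 2 \<open>0 \<le> E a\<close> by simp
  next
    case 3
    obtain z1 where z1: "a < z1" "z1 < x" "E x - E a = (x - a) * E' z1"
      using MVT2[of a x E E'] deriv 3 by auto
    obtain z2 where z2: "x < z2" "z2 < b" "E b - E x = (b - x) * E' z2"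
      using MVT2[of x b E E'] deriv 3 by auto
    have "(b - x) * (x - a) * E' z2 < (b - x) * (x - a) * E' z1"
      using 3 antimono[of z1 z2] z1 z2 by (intro mult_strict_left_mono) auto
    then have "(x - a) * (E b - E x) < (b - x) * (E x - E a)"
      unfolding z1(3) z2(3) by (simp add: ac_simps)
    then have "(b - x) * E a + (x - a) * E b < (b - a) * E x"
      by (simp add: algebra_simps)
    moreover have "0 \<le> (b - x) * E a + (x - a) * E b"
      using 3 assms(4,5) by simp
    ultimately have "0 < (b - a) * E x"
      by linarith
    then show ?thesis
      using \<open>a < b\<close> by (simp add: zero_less_mult_iff)
  qed
qed

section \<open>The entropy function\<close>

lemma mult_ln_ge: "0 \<le> x \<Longrightarrow> x - 1 \<le> x * ln (x::real)"
proof (cases "x = 0")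
  case False
  assume "0 \<le> x"
  then have "0 < x" using False by simp
  have "ln (1/x) \<le> 1/x - 1"
    using \<open>0 < x\<close> by (intro ln_le_minus_one) simp
  then have "x * (- ln x) \<le> x * (1/x - 1)"
    using \<open>0 < x\<close> by (intro mult_left_mono) (auto simp: ln_div)
  then show ?thesis
    using \<open>0 < x\<close> by (simp add: right_diff_distrib)
qed simp

lemma continuous_on_mult_ln: "continuous_on {0..} (\<lambda>x::real. x * ln x)"
  unfolding continuous_on_eq_continuous_within
proof
  fix x :: real
  assume "x \<in> {0..}"
  show "continuous (at x within {0..}) (\<lambda>x. x * ln x)"
  proof (cases "x = 0")
    case True
    have "((\<lambda>x::real. x * ln x) \<longlongrightarrow> 0) (at_right 0)"
      by real_asymp
    then show ?thesis
      using True by (simp add: continuous_within at_within_Ici_at_right)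
  next
    case False
    then have "isCont (\<lambda>x. x * ln x) x"
      using \<open>x \<in> {0..}\<close> by (auto intro!: continuous_intros)
    then show ?thesis
      by (rule continuous_at_imp_continuous_within)
  qed
qed

definition logit :: "real \<Rightarrow> real" where
  "logit u = ln u - ln (1 - u)"

lemma has_real_derivative_logit:
  "0 < u \<Longrightarrow> u < 1 \<Longrightarrow> (logit has_real_derivative 1/u + 1/(1 - u)) (at u)"
  unfolding logit_def[abs_def] by (auto intro!: derivative_eq_intros simp: field_simps)

lemma logit_strict_mono: "0 < x \<Longrightarrow> x < y \<Longrightarrow> y < 1 \<Longrightarrow> logit x < logit y"
  unfolding logit_def by (smt (verit) ln_less_cancel_iff)

lemma logit_pos_iff: "0 < x \<Longrightarrow> x < 1 \<Longrightarrow> 0 < logit x \<longleftrightarrow> 1/2 < x"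
  unfolding logit_def by (auto simp: field_simps)

lemma logit_nonneg_iff: "0 < x \<Longrightarrow> x < 1 \<Longrightarrow> 0 \<le> logit x \<longleftrightarrow> 1/2 \<le> x"
  unfolding logit_def by (auto simp: field_simps)

(* also at u = 0 and u = 1, since ln 0 = 0 *)
lemma I_fun_eq: "I_fun u = (u * ln u + (1 - u) * ln (1 - u)) / 2"
  by (simp add: I_fun_def add_divide_distrib)

lemma has_real_derivative_I_fun:
  "0 < u \<Longrightarrow> u < 1 \<Longrightarrow> (I_fun has_real_derivative logit u / 2) (at u)"
  unfolding I_fun_eq[abs_def] logit_def
  by (auto intro!: derivative_eq_intros simp: divide_simps)

lemma I_fun_neg: "0 < u \<Longrightarrow> u < 1 \<Longrightarrow> I_fun u < 0"
  by (simp add: I_fun_eq mult_pos_neg add_neg_neg)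

lemma I_fun_ge: "0 \<le> u \<Longrightarrow> u \<le> 1 \<Longrightarrow> - 1/2 \<le> I_fun u"
  using mult_ln_ge[of u] mult_ln_ge[of "1 - u"] by (simp add: I_fun_eq)

lemma continuous_on_I_fun: "continuous_on {0..1} I_fun"
proof -
  have "continuous_on {0..1} (\<lambda>u::real. u * ln u)"
    by (rule continuous_on_subset[OF continuous_on_mult_ln]) auto
  moreover have "continuous_on {0..1} (\<lambda>u::real. (1 - u) * ln (1 - u))"
    by (rule continuous_on_compose2[OF continuous_on_mult_ln]) (auto intro!: continuous_intros)
  ultimately show ?thesis
    unfolding I_fun_eq[abs_def] by (intro continuous_on_add continuous_on_divide continuous_on_const) auto
qed

section \<open>The objective and its critical level\<close>

lemma obj_0 [simp]: "obj \<theta> k 0 = 0"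
  by (simp add: obj_def I_fun_eq)

lemma obj_1 [simp]: "obj \<theta> k 1 = \<theta>"
  by (simp add: obj_def I_fun_eq)

lemma continuous_on_obj: "0 < k \<Longrightarrow> continuous_on {0..1} (obj \<theta> k)"
  unfolding obj_def[abs_def]
  by (intro continuous_on_diff continuous_on_mult continuous_on_const continuous_on_I_fun
      continuous_on_powr' continuous_on_id) auto

definition theta_crit :: "real \<Rightarrow> real \<Rightarrow> real" where
  "theta_crit k u = logit u * u powr (1 - k) / (2 * k)"

lemma has_real_derivative_obj:
  assumes "0 < u" "u < 1" "0 < k"
  shows "(obj \<theta> k has_real_derivative k * u powr (k - 1) * (\<theta> - theta_crit k u)) (at u)"
proof -
  have "(obj \<theta> k has_real_derivative \<theta> * (k * u powr (k - 1)) - logit u / 2) (at u)"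
    unfolding obj_def[abs_def]
    by (intro DERIV_diff DERIV_cmult has_real_derivative_powr has_real_derivative_I_fun)
       (use assms in auto)
  moreover have "u powr (k - 1) * u powr (1 - k) = 1"
    using assms by (simp add: powr_add[symmetric])
  then have "\<theta> * (k * u powr (k - 1)) - logit u / 2 = k * u powr (k - 1) * (\<theta> - theta_crit k u)"
    using assms unfolding theta_crit_def by (simp add: field_simps)
  ultimately show ?thesis
    by simp
qed

definition phi :: "real \<Rightarrow> real \<Rightarrow> real" where
  "phi k u = 1 / (1 - u) - (k - 1) * logit u"

lemma has_real_derivative_theta_crit:
  assumes "0 < u" "u < 1" "0 < k"
  shows "(theta_crit k has_real_derivative phi k u * u powr (- k) / (2 * k)) (at u)"
proof -
  have "(theta_crit k has_real_derivative
      ((1/u + 1/(1 - u)) * u powr (1 - k) + ((1 - k) * u powr (1 - k - 1)) * logit u) / (2 * k)) (at u)"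
    unfolding theta_crit_def[abs_def]
    by (intro DERIV_cdivide DERIV_mult has_real_derivative_logit has_real_derivative_powr)
       (use assms in auto)
  moreover have "u powr (1 - k) = u * u powr (- k)"
    using powr_add[of u 1 "- k"] assms by simp
  then have "(1/u + 1/(1 - u)) * u powr (1 - k) + ((1 - k) * u powr (1 - k - 1)) * logit u
      = phi k u * u powr (- k)"
    using assms unfolding phi_def by (simp add: field_simps)
  ultimately show ?thesis
    by simp
qed

lemma has_real_derivative_phi:
  assumes "0 < u" "u < 1"
  shows "(phi k has_real_derivative (k * u - (k - 1)) / (u * (1 - u)\<^sup>2)) (at u)"
proof -
  have "((\<lambda>u. 1 / (1 - u)) has_real_derivative 1 / (1 - u)\<^sup>2) (at u)"
    using assms by (auto intro!: derivative_eq_intros simp: power2_eq_square divide_simps)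
  then have "(phi k has_real_derivative 1 / (1 - u)\<^sup>2 - (k - 1) * (1/u + 1/(1 - u))) (at u)"
    unfolding phi_def[abs_def] by (intro DERIV_diff DERIV_cmult has_real_derivative_logit assms)
  moreover have "1 / (1 - u)\<^sup>2 - (k - 1) * (1/u + 1/(1 - u)) = (k * u - (k - 1)) / (u * (1 - u)\<^sup>2)"
    using assms by (simp add: divide_simps power2_eq_square) (simp add: algebra_simps)
  ultimately show ?thesis
    by simp
qed

lemma theta_crit_strict_mono:
  assumes "0 < x" "x < y" "y < 1" "0 < k" and "\<And>t. x < t \<Longrightarrow> t < y \<Longrightarrow> 0 < phi k t"
  shows "theta_crit k x < theta_crit k y"
  by (rule DERIV_pos_interior_imp_less[OF \<open>x < y\<close> has_real_derivative_theta_crit])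
     (use assms in auto)

lemma theta_crit_strict_antimono:
  assumes "0 < x" "x < y" "y < 1" "0 < k" and "\<And>t. x < t \<Longrightarrow> t < y \<Longrightarrow> phi k t < 0"
  shows "theta_crit k y < theta_crit k x"
  by (rule DERIV_neg_interior_imp_less[OF \<open>x < y\<close> has_real_derivative_theta_crit])
     (use assms in \<open>auto simp: mult_neg_pos divide_neg_pos\<close>)

lemma phi_strict_antimono:
  assumes "0 < x" "x < y" "y \<le> (k - 1) / k" "0 < k"
  shows "phi k y < phi k x"
proof -
  have "(k - 1) / k < 1"
    using assms by simp
  then have y1: "y < 1"
    using assms by linarith
  have "(k * t - (k - 1)) / (t * (1 - t)\<^sup>2) < 0" if "x < t" "t < y" for t
  proof -
    have "k * t < k * y"
      using that assms by simp
    also have "\<dots> \<le> k - 1"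
      using assms by (simp add: pos_le_divide_eq mult.commute)
    finally show ?thesis
      using that assms y1 by (intro divide_neg_pos mult_pos_pos) auto
  qed
  then show ?thesis
    by (intro DERIV_neg_interior_imp_less[OF \<open>x < y\<close> has_real_derivative_phi])
       (use assms y1 in auto)
qed

lemma phi_strict_mono:
  assumes "(k - 1) / k \<le> x" "x < y" "y < 1" "1 < k"
  shows "phi k x < phi k y"
proof -
  have "0 < x"
    using assms by (smt (verit) divide_pos_pos)
  have "0 < (k * t - (k - 1)) / (t * (1 - t)\<^sup>2)" if "x < t" "t < y" for t
  proof -
    have "k - 1 \<le> k * x"
      using assms by (simp add: pos_divide_le_eq mult.commute)
    also have "\<dots> < k * t"
      using that assms by simp
    finally show ?thesis
      using that assms \<open>0 < x\<close> by (intro divide_pos_pos mult_pos_pos) auto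
  qed
  then show ?thesis
    by (intro DERIV_pos_interior_imp_less[OF \<open>x < y\<close> has_real_derivative_phi])
       (use assms \<open>0 < x\<close> in auto)
qed

lemma phi_half [simp]: "phi k (1/2) = 2"
  by (simp add: phi_def logit_def)

lemma phi_argmin: "1 < k \<Longrightarrow> phi k ((k - 1) / k) = k - (k - 1) * ln (k - 1)"
  by (simp add: phi_def logit_def ln_div field_simps)

lemma phi_near_one_pos:
  assumes "2 < k"
  shows "0 < phi k (1 - 1 / (4 * k\<^sup>2))"
proof -
  let ?u = "1 - 1 / (4 * k\<^sup>2)"
  have "2 * 2 < k * k"
    using assms by (intro mult_strict_mono) auto
  then have u: "0 < ?u" "?u < 1"
    using assms by (auto simp: field_simps power2_eq_square)
  have "logit ?u \<le> - ln (1 / (4 * k\<^sup>2))"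
    using u by (simp add: logit_def)
  also have "\<dots> = ln (2 * k) + ln (2 * k)"
    using ln_mult[of "2 * k" "2 * k"] assms by (simp add: ln_div power2_eq_square)
  also have "\<dots> \<le> 2 * (2 * k - 1)"
    using ln_le_minus_one[of "2 * k"] assms by simp
  finally have "(k - 1) * logit ?u \<le> (k - 1) * (2 * (2 * k - 1))"
    using assms by (intro mult_left_mono) auto
  then show ?thesis
    using assms by (simp add: phi_def power2_eq_square algebra_simps)
qed

section \<open>The threshold k0\<close>

lemma k0_equation_strict_mono:
  fixes x y :: real
  assumes "2 \<le> x" "x < y"
  shows "(x - 1) / x * ln (x - 1) < (y - 1) / y * ln (y - 1)"
proof (cases "x = 2")
  case True
  then show ?thesis
    using assms by (simp add: mult_pos_pos)
next
  case False
  with assms have "2 < x"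
    by simp
  have "(x - 1) / x < (y - 1) / y"
    using \<open>2 < x\<close> assms by (simp add: field_simps)
  moreover have "ln (x - 1) < ln (y - 1)"
    using \<open>2 < x\<close> assms by simp
  ultimately show ?thesis
    using \<open>2 < x\<close> assms by (intro mult_strict_mono) auto
qed

lemma k0_root: "2 < k0" "(k0 - 1) / k0 * ln (k0 - 1) = 1"
proof -
  define g where "g k = (k - 1) / k * ln (k - 1)" for k :: real
  have "continuous_on {2..exp 2 + 1} g"
    unfolding g_def by (auto intro!: continuous_intros)
  moreover have "1 \<le> g (exp 2 + 1)"
    by (simp add: g_def le_divide_eq_1_pos add_pos_pos)
  ultimately obtain r where r: "2 \<le> r" "r \<le> exp 2 + 1" "g r = 1"
    using IVT'[of g 2 1 "exp 2 + 1"] by (auto simp: g_def)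
  have "r \<noteq> 2"
    using r by (auto simp: g_def)
  with r have "2 < r"
    by simp
  have "k = r" if "1 < k" "g k = 1" for k
  proof -
    have "2 < k"
    proof (rule ccontr)
      assume "\<not> 2 < k"
      then have "ln (k - 1) \<le> 0"
        using that(1) by simp
      then have "g k \<le> 0"
        unfolding g_def using that(1) by (intro mult_nonneg_nonpos) auto
      with that(2) show False
        by simp
    qed
    then show ?thesis
      using k0_equation_strict_mono[of k r] k0_equation_strict_mono[of r k] \<open>2 < r\<close> r(3) that(2)
      unfolding g_def by (cases k r rule: linorder_cases) auto
  qed
  then have "k0 = r"
    unfolding k0_def using \<open>2 < r\<close> r(3) by (intro the_equality) (auto simp: g_def)
  then show "2 < k0" "(k0 - 1) / k0 * ln (k0 - 1) = 1"
    using \<open>2 < r\<close> r(3) by (simp_all add: g_def)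
qed

lemma phi_argmin_neg:
  assumes "k0 < k"
  shows "phi k ((k - 1) / k) < 0"
proof -
  have "1 < (k - 1) / k * ln (k - 1)"
    using k0_equation_strict_mono[of k0 k] k0_root assms by simp
  moreover have "0 < k"
    using k0_root(1) assms by simp
  ultimately show ?thesis
    using k0_root(1) assms by (simp add: phi_argmin field_simps)
qed

lemma phi_sign_pattern:
  assumes "k0 < k"
  obtains a b where "1/2 < a" "a < (k - 1) / k" "(k - 1) / k < b" "b < 1" "phi k a = 0"
    "\<And>x. 0 < x \<Longrightarrow> x < a \<Longrightarrow> 0 < phi k x"
    "\<And>x. a < x \<Longrightarrow> x < b \<Longrightarrow> phi k x < 0"
    "\<And>x. b < x \<Longrightarrow> x < 1 \<Longrightarrow> 0 < phi k x"
proof -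
  let ?c = "(k - 1) / k" and ?r = "1 - 1 / (4 * k\<^sup>2)"
  have "2 < k"
    using k0_root(1) assms by simp
  then have c: "1/2 < ?c" "?c < 1"
    by (simp_all add: field_simps)
  have "2 * 2 < k * k"
    using \<open>2 < k\<close> by (intro mult_strict_mono) auto
  then have r: "?c < ?r" "?r < 1"
    using \<open>2 < k\<close> by (simp_all add: field_simps power2_eq_square)
  have cont: "continuous_on {x..y} (phi k)" if "0 < x" "y < 1" for x y
    using that DERIV_isCont[OF has_real_derivative_phi]
    by (intro continuous_at_imp_continuous_on) auto
  obtain a where a: "1/2 \<le> a" "a \<le> ?c" "phi k a = 0"
    using IVT2'[of "phi k" ?c 0 "1/2"] cont[of "1/2" ?c] phi_argmin_neg[OF assms] c by force
  obtain b where b: "?c \<le> b" "b \<le> ?r" "phi k b = 0"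
    using IVT'[of "phi k" ?c 0 ?r] cont[of ?c ?r] phi_argmin_neg[OF assms]
      phi_near_one_pos[OF \<open>2 < k\<close>] c r by force
  have "a \<noteq> 1/2"
    using a(3) phi_half[of k] by force
  moreover have "a \<noteq> ?c" "b \<noteq> ?c"
    using a b phi_argmin_neg[OF assms] by auto
  ultimately have ab: "1/2 < a" "a < ?c" "?c < b" "b < 1"
    using a(1,2) b(1,2) le_less_trans[OF b(2) r(2)] by (auto intro: order_le_neq_trans)
  show ?thesis
  proof (rule that[OF ab a(3)])
    fix x
    show "0 < phi k x" if "0 < x" "x < a"
      using phi_strict_antimono[of x a k] that ab a(3) \<open>2 < k\<close> by simp
    show "phi k x < 0" if "a < x" "x < b"
    proof (cases "x \<le> ?c")
      case True
      then show ?thesis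
        using phi_strict_antimono[of a x k] that ab a(3) \<open>2 < k\<close> by simp
    next
      case False
      then show ?thesis
        using phi_strict_mono[of k x b] that ab b(3) \<open>2 < k\<close> by simp
    qed
    show "0 < phi k x" if "b < x" "x < 1"
      using phi_strict_mono[of k b x] that ab b(3) \<open>2 < k\<close> by simp
  qed
qed

section \<open>Global maximisers\<close>

lemma maximisers_le: "u \<in> maximisers \<theta> k \<Longrightarrow> v \<in> {0..1} \<Longrightarrow> obj \<theta> k v \<le> obj \<theta> k u"
  by (simp add: maximisers_def)

lemma maximisers_nonempty: "0 < k \<Longrightarrow> maximisers \<theta> k \<noteq> {}"
  using continuous_attains_sup[of "{0..1}" "obj \<theta> k"] continuous_on_obj
  by (fastforce simp: maximisers_def)

lemma maximiser_pos:
  assumes "0 \<le> \<theta>" "u \<in> maximisers \<theta> k"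
  shows "0 < u"
proof -
  have "0 \<le> \<theta> * (1/2) powr k"
    using assms(1) by simp
  then have "0 < obj \<theta> k (1/2)"
    using I_fun_neg[of "1/2"] by (simp add: obj_def)
  then have "u \<noteq> 0"
    using maximisers_le[OF assms(2), of "1/2"] by auto
  then show ?thesis
    using assms(2) by (simp add: maximisers_def)
qed

lemma maximiser_less_one:
  assumes "0 \<le> \<theta>" "1 \<le> k" "u \<in> maximisers \<theta> k"
  shows "u < 1"
proof -
  \<comment> \<open>\<open>logit u0 = 2 \<theta> k\<close>; beyond \<open>u0\<close> the derivative \<open>\<theta> k u^(k-1) - logit u / 2\<close> is negative\<close>
  define E where "E = exp (2 * \<theta> * k)"
  define u0 where "u0 = E / (1 + E)"
  have "0 < E"
    by (simp add: E_def)
  then have u0: "0 < u0" "u0 < 1"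
    by (auto simp: u0_def field_simps)
  have "1 - u0 = 1 / (1 + E)"
    using \<open>0 < E\<close> by (simp add: u0_def field_simps)
  then have "logit u0 = ln E"
    using \<open>0 < E\<close> by (simp add: logit_def u0_def ln_div)
  then have "logit u0 = 2 * \<theta> * k"
    by (simp add: E_def)
  have "obj \<theta> k 1 < obj \<theta> k u0"
  proof (rule DERIV_neg_imp_decreasing_open[OF \<open>u0 < 1\<close>])
    show "continuous_on {u0..1} (obj \<theta> k)"
      using continuous_on_obj[of k \<theta>] assms(2) u0 by (auto elim: continuous_on_subset)
    fix t assume t: "u0 < t" "t < 1"
    have "t powr (k - 1) \<le> 1"
      using t u0 assms(2) by (intro powr_le1) auto
    then have "\<theta> * (k * t powr (k - 1)) \<le> \<theta> * k"
      using assms(1,2) by (intro mult_left_mono mult_left_le) auto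
    moreover have "logit u0 < logit t"
      using logit_strict_mono t u0 by simp
    ultimately have "\<theta> * (k * t powr (k - 1)) - logit t / 2 < 0"
      using \<open>logit u0 = 2 * \<theta> * k\<close> by simp
    moreover have "k * t powr (k - 1) * (\<theta> - theta_crit k t) = \<theta> * (k * t powr (k - 1)) - logit t / 2"
      using t u0 assms(2) by (simp add: theta_crit_def field_simps powr_add[symmetric])
    ultimately show "\<exists>d. (obj \<theta> k has_real_derivative d) (at t) \<and> d < 0"
      using has_real_derivative_obj[of t k \<theta>] t u0 assms(2) by auto
  qed
  then have "u \<noteq> 1"
    using maximisers_le[OF assms(3), of u0] u0 by auto
  then show ?thesis
    using assms(3) by (simp add: maximisers_def)
qed

lemma maximiser_theta_crit:
  assumes "0 \<le> \<theta>" "1 \<le> k" "u \<in> maximisers \<theta> k"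
  shows "theta_crit k u = \<theta>"
proof -
  have u: "0 < u" "u < 1"
    using maximiser_pos maximiser_less_one assms by blast+
  have "k * u powr (k - 1) * (\<theta> - theta_crit k u) = 0"
  proof (rule DERIV_local_max[OF has_real_derivative_obj])
    show "0 < min u (1 - u)"
      using u by simp
    show "\<forall>y. \<bar>u - y\<bar> < min u (1 - u) \<longrightarrow> obj \<theta> k y \<le> obj \<theta> k u"
      using maximisers_le[OF assms(3)] by (auto simp: abs_less_iff)
  qed (use u assms(2) in auto)
  then show ?thesis
    using u assms(2) by simp
qed

lemma maximiser_ge_half:
  assumes "0 \<le> \<theta>" "1 \<le> k" "u \<in> maximisers \<theta> k"
  shows "1/2 \<le> u"
proof -
  have u: "0 < u" "u < 1"
    using maximiser_pos maximiser_less_one assms by blast+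
  have "0 \<le> theta_crit k u"
    using maximiser_theta_crit[OF assms] assms(1) by simp
  then have "0 \<le> logit u"
    using u assms(2) by (simp add: theta_crit_def zero_le_divide_iff zero_le_mult_iff)
  then show ?thesis
    using logit_nonneg_iff u by simp
qed

lemma maximisers_strict_mono:
  assumes "0 \<le> \<theta>" "\<theta> < \<theta>'" "1 \<le> k" "u \<in> maximisers \<theta> k" "v \<in> maximisers \<theta>' k"
  shows "u < v"
proof -
  have u: "0 < u" "u < 1" and v: "0 < v" "v < 1"
    using maximiser_pos maximiser_less_one assms by (meson order.trans less_imp_le)+
  have "obj \<theta> k v \<le> obj \<theta> k u" "obj \<theta>' k u \<le> obj \<theta>' k v"
    using maximisers_le[OF assms(4)] maximisers_le[OF assms(5)] u v by auto
  then have "0 \<le> (\<theta>' - \<theta>) * (v powr k - u powr k)"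
    by (simp add: obj_def algebra_simps)
  then have "u powr k \<le> v powr k"
    using assms(2) by (simp add: zero_le_mult_iff)
  then have "u \<le> v"
  proof (rule contrapos_pp)
    assume "\<not> u \<le> v"
    then have "v powr k < u powr k"
      using v assms(3) by (intro powr_less_mono2) auto
    then show "\<not> u powr k \<le> v powr k"
      by simp
  qed
  moreover have "u \<noteq> v"
    using maximiser_theta_crit[of \<theta> k u] maximiser_theta_crit[of \<theta>' k v] assms by auto
  ultimately show ?thesis
    by simp
qed

definition max_obj :: "real \<Rightarrow> real set \<Rightarrow> real \<Rightarrow> real" where
  "max_obj k S \<theta> = Sup (obj \<theta> k ` S)"

lemma max_obj_attained:
  assumes "0 < k" "compact S" "S \<noteq> {}" "S \<subseteq> {0..1}"
  obtains u where "u \<in> S" "\<And>v. v \<in> S \<Longrightarrow> obj \<theta> k v \<le> obj \<theta> k u" "max_obj k S \<theta> = obj \<theta> k u"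
proof -
  obtain u where u: "u \<in> S" "\<forall>v\<in>S. obj \<theta> k v \<le> obj \<theta> k u"
    using continuous_attains_sup[OF assms(2,3) continuous_on_subset[OF continuous_on_obj assms(4)]]
      assms(1) by blast
  moreover have "max_obj k S \<theta> = obj \<theta> k u"
    unfolding max_obj_def by (rule cSup_eq_maximum) (use u in auto)
  ultimately show ?thesis
    using that by blast
qed

lemma max_obj_lipschitz:
  assumes "0 < k" "compact S" "S \<noteq> {}" "S \<subseteq> {0..1}"
  shows "\<bar>max_obj k S \<theta> - max_obj k S \<theta>'\<bar> \<le> \<bar>\<theta> - \<theta>'\<bar>"
proof -
  have "max_obj k S t - max_obj k S t' \<le> \<bar>t - t'\<bar>" for t t'
  proof -
    obtain u where u: "u \<in> S" "max_obj k S t = obj t k u"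
      using max_obj_attained[OF assms] by metis
    obtain u' where u': "\<And>v. v \<in> S \<Longrightarrow> obj t' k v \<le> obj t' k u'" "max_obj k S t' = obj t' k u'"
      using max_obj_attained[OF assms] by metis
    have "u \<in> {0..1}"
      using u(1) assms(4) by blast
    then have "0 \<le> u powr k" "u powr k \<le> 1"
      using assms(1) by (auto intro!: powr_le1)
    then have "(t - t') * u powr k \<le> \<bar>t - t'\<bar>"
      by (metis abs_ge_self abs_mult_pos mult.commute mult_left_le order_trans abs_ge_zero)
    moreover have "obj t k u = obj t' k u + (t - t') * u powr k"
      by (simp add: obj_def algebra_simps)
    ultimately show ?thesis
      using u u'(1)[OF u(1)] u'(2) by linarith
  qed
  from this[of \<theta> \<theta>'] this[of \<theta>' \<theta>] show ?thesis
    by (simp add: abs_minus_commute)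
qed

lemma continuous_on_max_obj:
  assumes "0 < k" "compact S" "S \<noteq> {}" "S \<subseteq> {0..1}"
  shows "continuous_on A (max_obj k S)"
  by (intro lipschitz_on_continuous_on[where L = 1] lipschitz_onI)
     (use max_obj_lipschitz[OF assms] in \<open>auto simp: dist_real_def\<close>)

section \<open>Exactly two maximisers above k0\<close>

locale supercritical =
  fixes k a b :: real
  assumes k0_less: "k0 < k"
    and half_less_a: "1/2 < a" and a_less_argmin: "a < (k - 1) / k"
    and argmin_less_b: "(k - 1) / k < b" and b_less_1: "b < 1"
    and phi_a: "phi k a = 0"
    and phi_pos_below_a: "\<And>x. 0 < x \<Longrightarrow> x < a \<Longrightarrow> 0 < phi k x"
    and phi_neg_between: "\<And>x. a < x \<Longrightarrow> x < b \<Longrightarrow> phi k x < 0"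
    and phi_pos_above_b: "\<And>x. b < x \<Longrightarrow> x < 1 \<Longrightarrow> 0 < phi k x"
begin

abbreviation argmin :: real where
  "argmin \<equiv> (k - 1) / k"

lemma two_less_k: "2 < k"
  using k0_root(1) k0_less by simp

lemma k_pos: "0 < k"
  using two_less_k by simp

lemma argmin_bounds: "0 < argmin" "argmin < 1"
  using two_less_k by simp_all

lemma a_less_of_phi_neg: "0 < x \<Longrightarrow> phi k x < 0 \<Longrightarrow> a < x"
  using phi_pos_below_a[of x] phi_a by (cases x a rule: linorder_cases) auto

lemma theta_crit_strict_mono_below_a:
  "0 < x \<Longrightarrow> x < y \<Longrightarrow> y \<le> a \<Longrightarrow> theta_crit k x < theta_crit k y"
  using two_less_k a_less_argmin argmin_less_b b_less_1 phi_pos_below_a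
  by (intro theta_crit_strict_mono) auto

lemma theta_crit_strict_antimono_between:
  "a \<le> x \<Longrightarrow> x < y \<Longrightarrow> y \<le> b \<Longrightarrow> theta_crit k y < theta_crit k x"
  using two_less_k half_less_a b_less_1 phi_neg_between
  by (intro theta_crit_strict_antimono) auto

lemma theta_crit_strict_mono_above_b:
  "b \<le> x \<Longrightarrow> x < y \<Longrightarrow> y < 1 \<Longrightarrow> theta_crit k x < theta_crit k y"
  using two_less_k half_less_a a_less_argmin argmin_less_b phi_pos_above_b
  by (intro theta_crit_strict_mono) auto

lemma maximiser_outside_ab:
  assumes "0 \<le> \<theta>" "u \<in> maximisers \<theta> k"
  shows "u < a \<or> b \<le> u"
proof (rule ccontr)
  assume "\<not> (u < a \<or> b \<le> u)"
  then have u: "a \<le> u" "u < b"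
    by auto
  have "0 < k * t powr (k - 1) * (\<theta> - theta_crit k t)" if "u < t" "t < b" for t
  proof -
    have "theta_crit k t < theta_crit k u"
      using theta_crit_strict_antimono_between u that by simp
    then show ?thesis
      using maximiser_theta_crit[OF assms(1) _ assms(2)] two_less_k that u half_less_a by simp
  qed
  then have "obj \<theta> k u < obj \<theta> k b"
    by (intro DERIV_pos_interior_imp_less[OF \<open>u < b\<close> has_real_derivative_obj])
       (use u half_less_a b_less_1 two_less_k in auto)
  moreover have "obj \<theta> k b \<le> obj \<theta> k u"
    using maximisers_le[OF assms(2)] half_less_a u b_less_1 by simp
  ultimately show False
    by simp
qed

lemma maximisers_eq_below_a:
  assumes "0 \<le> \<theta>" "u \<in> maximisers \<theta> k" "v \<in> maximisers \<theta> k" "u < a" "v < a"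
  shows "u = v"
proof -
  have "theta_crit k u = theta_crit k v"
    using maximiser_theta_crit assms two_less_k by simp
  moreover have "0 < u" "0 < v"
    using maximiser_pos assms by blast+
  ultimately show ?thesis
    using theta_crit_strict_mono_below_a[of u v] theta_crit_strict_mono_below_a[of v u] assms
    by (cases u v rule: linorder_cases) auto
qed

lemma maximisers_eq_above_b:
  assumes "0 \<le> \<theta>" "u \<in> maximisers \<theta> k" "v \<in> maximisers \<theta> k" "b \<le> u" "b \<le> v"
  shows "u = v"
proof -
  have "theta_crit k u = theta_crit k v"
    using maximiser_theta_crit assms two_less_k by simp
  moreover have "u < 1" "v < 1"
    using maximiser_less_one[OF assms(1) _ assms(2)] maximiser_less_one[OF assms(1) _ assms(3)]
      two_less_k by auto
  ultimately show ?thesis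
    using theta_crit_strict_mono_above_b[of u v] theta_crit_strict_mono_above_b[of v u] assms
    by (cases u v rule: linorder_cases) auto
qed

lemma interval_below_argmin: "compact {0..argmin}" "{0..argmin} \<noteq> {}" "{0..argmin} \<subseteq> {0..1}"
  and interval_above_argmin: "compact {argmin..1}" "{argmin..1} \<noteq> {}" "{argmin..1} \<subseteq> {0..1}"
  using argmin_bounds by auto

lemma max_obj_upper_le_lower_at_0: "max_obj k {argmin..1} 0 \<le> max_obj k {0..argmin} 0"
proof -
  obtain m where m: "m \<in> maximisers 0 k"
    using maximisers_nonempty two_less_k by fastforce
  have "0 < m" "m < 1"
    using maximiser_pos[OF _ m] maximiser_less_one[OF _ _ m] two_less_k by auto
  moreover have "logit m = 0"
    using maximiser_theta_crit[OF _ _ m] two_less_k \<open>0 < m\<close> by (simp add: theta_crit_def)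
  ultimately have "m \<in> {0..argmin}"
    using logit_pos_iff[of m] half_less_a a_less_argmin by auto
  obtain u where "\<And>v. v \<in> {0..argmin} \<Longrightarrow> obj 0 k v \<le> obj 0 k u" "max_obj k {0..argmin} 0 = obj 0 k u"
    using max_obj_attained[OF k_pos interval_below_argmin] by blast
  moreover obtain w where "w \<in> {argmin..1}" "max_obj k {argmin..1} 0 = obj 0 k w"
    using max_obj_attained[OF k_pos interval_above_argmin] by blast
  moreover have "obj 0 k w \<le> obj 0 k m"
    using maximisers_le[OF m] \<open>w \<in> {argmin..1}\<close> argmin_bounds by simp
  ultimately show ?thesis
    using \<open>m \<in> {0..argmin}\<close> by fastforce
qed

lemma max_obj_lower_le_upper:
  obtains \<Theta> where "0 \<le> \<Theta>" "max_obj k {0..argmin} \<Theta> \<le> max_obj k {argmin..1} \<Theta>"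
proof -
  \<comment> \<open>chosen so that the value \<open>\<Theta>\<close> at \<open>u = 1\<close> exceeds the bound \<open>\<Theta> argmin\<^sup>k + 1/2\<close> on \<open>[0, argmin]\<close>\<close>
  define \<Theta> where "\<Theta> = 1 / (1 - argmin powr k)"
  have "argmin powr k < 1"
    using powr_less_mono2[of k argmin 1] argmin_bounds two_less_k by simp
  then have "0 < \<Theta>" "\<Theta> - \<Theta> * argmin powr k = 1"
    by (simp_all add: \<Theta>_def field_simps)
  obtain u where u: "u \<in> {0..argmin}" "max_obj k {0..argmin} \<Theta> = obj \<Theta> k u"
    using max_obj_attained[OF k_pos interval_below_argmin] by blast
  obtain w where w: "\<And>v. v \<in> {argmin..1} \<Longrightarrow> obj \<Theta> k v \<le> obj \<Theta> k w"
    "max_obj k {argmin..1} \<Theta> = obj \<Theta> k w"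
    using max_obj_attained[OF k_pos interval_above_argmin] by blast
  have "u powr k \<le> argmin powr k"
    using u(1) two_less_k by (intro powr_mono2) auto
  then have "\<Theta> * u powr k \<le> \<Theta> * argmin powr k"
    using \<open>0 < \<Theta>\<close> by simp
  then have "obj \<Theta> k u \<le> \<Theta> * argmin powr k + 1/2"
    using I_fun_ge[of u] u(1) argmin_bounds by (simp add: obj_def)
  also have "\<dots> \<le> obj \<Theta> k 1"
    using \<open>\<Theta> - \<Theta> * argmin powr k = 1\<close> by simp
  also have "\<dots> \<le> obj \<Theta> k w"
    using w(1)[of 1] argmin_bounds by simp
  finally show ?thesis
    using \<open>0 < \<Theta>\<close> u(2) w(2) by (auto intro!: that[of \<Theta>])
qed

lemma balanced_theta_exists:
  obtains \<theta> where "0 \<le> \<theta>" "max_obj k {0..argmin} \<theta> = max_obj k {argmin..1} \<theta>"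
proof -
  define D where "D \<theta> = max_obj k {argmin..1} \<theta> - max_obj k {0..argmin} \<theta>" for \<theta>
  obtain \<Theta> where "0 \<le> \<Theta>" "0 \<le> D \<Theta>"
    using max_obj_lower_le_upper by (auto simp: D_def)
  moreover have "D 0 \<le> 0"
    using max_obj_upper_le_lower_at_0 by (simp add: D_def)
  moreover have "continuous_on {0..\<Theta>} D"
    unfolding D_def[abs_def] using two_less_k
    by (intro continuous_on_diff continuous_on_max_obj interval_below_argmin interval_above_argmin) auto
  ultimately obtain \<theta> where "0 \<le> \<theta>" "D \<theta> = 0"
    using IVT'[of D 0 0 \<Theta>] by auto
  then show ?thesis
    by (auto intro!: that[of \<theta>] simp: D_def)
qed

lemma two_maximisers_exist:
  obtains \<theta> u w where "0 \<le> \<theta>" "maximisers \<theta> k = {u, w}" "u < a" "b \<le> w"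
proof -
  obtain \<theta> where \<theta>: "0 \<le> \<theta>" "max_obj k {0..argmin} \<theta> = max_obj k {argmin..1} \<theta>"
    using balanced_theta_exists by blast
  obtain u where u: "u \<in> {0..argmin}" "\<And>v. v \<in> {0..argmin} \<Longrightarrow> obj \<theta> k v \<le> obj \<theta> k u"
    "max_obj k {0..argmin} \<theta> = obj \<theta> k u"
    using max_obj_attained[OF k_pos interval_below_argmin] by blast
  obtain w where w: "w \<in> {argmin..1}" "\<And>v. v \<in> {argmin..1} \<Longrightarrow> obj \<theta> k v \<le> obj \<theta> k w"
    "max_obj k {argmin..1} \<theta> = obj \<theta> k w"
    using max_obj_attained[OF k_pos interval_above_argmin] by blast
  have "obj \<theta> k u = obj \<theta> k w"
    using u(3) w(3) \<theta>(2) by simp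
  moreover have "obj \<theta> k v \<le> obj \<theta> k u \<or> obj \<theta> k v \<le> obj \<theta> k w" if "v \<in> {0..1}" for v
    using u(2)[of v] w(2)[of v] that by (cases "v \<le> argmin") auto
  ultimately have "obj \<theta> k v \<le> obj \<theta> k u" "obj \<theta> k v \<le> obj \<theta> k w" if "v \<in> {0..1}" for v
    using that by fastforce+
  then have uM: "u \<in> maximisers \<theta> k" and wM: "w \<in> maximisers \<theta> k"
    using u(1) w(1) argmin_bounds by (auto simp: maximisers_def)
  have "u < a" "b \<le> w"
    using maximiser_outside_ab[OF \<theta>(1) uM] maximiser_outside_ab[OF \<theta>(1) wM] u(1) w(1)
      a_less_argmin argmin_less_b by auto
  moreover have "maximisers \<theta> k = {u, w}"
  proof (intro equalityI subsetI)
    fix m assume m: "m \<in> maximisers \<theta> k"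
    then show "m \<in> {u, w}"
      using maximiser_outside_ab[OF \<theta>(1) m] maximisers_eq_below_a[OF \<theta>(1) m uM]
        maximisers_eq_above_b[OF \<theta>(1) m wM] \<open>u < a\<close> \<open>b \<le> w\<close> by auto
  qed (use uM wM in auto)
  ultimately show ?thesis
    using that \<theta>(1) by blast
qed

lemma two_maximisers_shape:
  assumes "0 \<le> \<theta>" "card (maximisers \<theta> k) = 2"
  obtains u w where "maximisers \<theta> k = {u, w}" "u < a" "b \<le> w"
proof -
  obtain x y where xy: "maximisers \<theta> k = {x, y}" "x \<noteq> y"
    using assms(2) card_2_iff by metis
  then have x: "x \<in> maximisers \<theta> k" and y: "y \<in> maximisers \<theta> k"
    by auto
  have "\<not> (x < a \<and> y < a)" "\<not> (b \<le> x \<and> b \<le> y)"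
    using maximisers_eq_below_a[OF assms(1) x y] maximisers_eq_above_b[OF assms(1) x y] xy(2)
    by auto
  then consider "x < a" "b \<le> y" | "y < a" "b \<le> x"
    using maximiser_outside_ab[OF assms(1) x] maximiser_outside_ab[OF assms(1) y] by auto
  then show ?thesis
  proof cases
    case 1
    then show ?thesis
      using that xy(1) by blast
  next
    case 2
    then show ?thesis
      using that[of y x] xy(1) by (simp add: insert_commute)
  qed
qed

lemma two_maximisers_theta_unique:
  assumes "0 \<le> \<theta>" "card (maximisers \<theta> k) = 2" "0 \<le> \<theta>'" "card (maximisers \<theta>' k) = 2"
  shows "\<theta> = \<theta>'"
proof -
  have "\<not> t < t'"
    if t: "0 \<le> t" "card (maximisers t k) = 2" "0 \<le> t'" "card (maximisers t' k) = 2" for t t'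
  proof
    assume "t < t'"
    obtain u w where uw: "maximisers t k = {u, w}" "u < a" "b \<le> w"
      by (rule two_maximisers_shape[OF t(1,2)])
    obtain u' w' where uw': "maximisers t' k = {u', w'}" "u' < a" "b \<le> w'"
      by (rule two_maximisers_shape[OF t(3,4)])
    have "w < u'"
      by (rule maximisers_strict_mono[OF t(1) \<open>t < t'\<close>, of k]) (use two_less_k uw uw' in auto)
    then show False
      using uw uw' a_less_argmin argmin_less_b by simp
  qed
  from this[OF assms] this[OF assms(3,4,1,2)] show ?thesis
    by simp
qed

lemma theta_hat_maximisers:
  obtains u1 u2 where "0 \<le> theta_hat k" "maximisers (theta_hat k) k = {u1, u2}" "u1 < a" "b \<le> u2"
    "T1 k = u1 powr k" "T2 k = u2 powr k"
proof -
  obtain \<theta> u w where \<theta>: "0 \<le> \<theta>" "maximisers \<theta> k = {u, w}" "u < a" "b \<le> w"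
    using two_maximisers_exist by blast
  then have "u < w"
    using a_less_argmin argmin_less_b by simp
  then have "card (maximisers \<theta> k) = 2"
    using \<theta>(2) by simp
  then have "theta_hat k = \<theta>"
    unfolding theta_hat_def using \<theta>(1) two_maximisers_theta_unique by (intro the_equality) auto
  moreover have "u1_star \<theta> k = u" "u2_star \<theta> k = w"
    using \<theta>(2) \<open>u < w\<close> by (simp_all add: u1_star_def u2_star_def)
  ultimately show ?thesis
    using that \<theta> by (simp add: T1_def T2_def)
qed

end

lemma supercritical_exists:
  assumes "k0 < k"
  obtains a b where "supercritical k a b"
proof -
  obtain a b where "1/2 < a" "a < (k - 1) / k" "(k - 1) / k < b" "b < 1" "phi k a = 0"
    "\<And>x. 0 < x \<Longrightarrow> x < a \<Longrightarrow> 0 < phi k x"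
    "\<And>x. a < x \<Longrightarrow> x < b \<Longrightarrow> phi k x < 0"
    "\<And>x. b < x \<Longrightarrow> x < 1 \<Longrightarrow> 0 < phi k x"
    using phi_sign_pattern[OF assms] by blast
  then have "supercritical k a b"
    using assms by unfold_locales
  then show ?thesis
    by (rule that)
qed

section \<open>The objective in the variable T = u^k\<close>

definition obj_T :: "real \<Rightarrow> real \<Rightarrow> real \<Rightarrow> real" where
  "obj_T k \<theta> T = \<theta> * T - I_fun (T powr (1 / k))"

lemma obj_T_powr: "0 < k \<Longrightarrow> 0 \<le> u \<Longrightarrow> obj_T k \<theta> (u powr k) = obj \<theta> k u"
  by (simp add: obj_T_def obj_def powr_powr)

lemma obj_T_le_maximiser:
  assumes "0 < k" "u \<in> maximisers \<theta> k" "T \<in> {0..1}"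
  shows "obj_T k \<theta> T \<le> obj_T k \<theta> (u powr k)"
proof -
  have "T powr (1 / k) \<in> {0..1}"
    using assms by (auto intro: powr_le1)
  then have "obj \<theta> k (T powr (1 / k)) \<le> obj \<theta> k u"
    by (rule maximisers_le[OF assms(2)])
  moreover have "0 \<le> u"
    using assms(2) by (simp add: maximisers_def)
  ultimately show ?thesis
    using obj_T_powr[of k "T powr (1 / k)" \<theta>] obj_T_powr[of k u \<theta>] assms(1,3)
    by (simp add: powr_powr)
qed

definition I_powr_deriv :: "real \<Rightarrow> real \<Rightarrow> real" where
  "I_powr_deriv \<sigma> T = T powr \<sigma> * logit (T powr \<sigma>) / (2 * T)"

lemma has_real_derivative_obj_T:
  assumes "0 < k" "0 < T" "T < 1"
  shows "(obj_T k \<theta> has_real_derivative \<theta> - I_powr_deriv (1 / k) T / k) (at T)"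
proof -
  let ?u = "T powr (1 / k)"
  have u: "0 < ?u" "?u < 1"
    using assms by (simp_all add: powr01_less_one)
  have "((\<lambda>T. I_fun (T powr (1 / k))) has_real_derivative
      logit ?u / 2 * ((1 / k) * T powr (1 / k - 1))) (at T)"
    by (rule DERIV_chain2[OF has_real_derivative_I_fun[OF u] has_real_derivative_powr])
       (use assms in auto)
  moreover have "logit ?u / 2 * ((1 / k) * T powr (1 / k - 1)) = I_powr_deriv (1 / k) T / k"
    using assms by (simp add: I_powr_deriv_def powr_diff mult_ac)
  ultimately have "((\<lambda>T. \<theta> * T - I_fun (T powr (1 / k))) has_real_derivative
      \<theta> * 1 - I_powr_deriv (1 / k) T / k) (at T)"
    by (intro DERIV_diff DERIV_cmult DERIV_ident) simp
  then show ?thesis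
    by (simp add: obj_T_def[abs_def])
qed

lemma obj_T_deriv_zero_at_max:
  assumes "0 < k" "0 < t" "t < 1" "\<And>T. T \<in> {0..1} \<Longrightarrow> obj_T k \<theta> T \<le> obj_T k \<theta> t"
  shows "\<theta> - I_powr_deriv (1 / k) t / k = 0"
  by (rule DERIV_local_max[OF has_real_derivative_obj_T[OF assms(1-3)], of "min t (1 - t)"])
     (use assms(2-4) in \<open>auto simp: abs_less_iff\<close>)

(* Written in l = ln T and u = T powr \<sigma>, the derivative of I_powr_deriv \<sigma> no longer involves \<sigma>,
   so comparing two exponents \<sigma>' < \<sigma> at the same T amounts to comparing u' > u at the same l. *)

definition I_powr_curv :: "real \<Rightarrow> real \<Rightarrow> real" where
  "I_powr_curv l u = u * ln u * (logit u + 1 / (1 - u)) / l - u * logit u"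

lemma has_real_derivative_I_powr_deriv:
  assumes "0 < \<sigma>" "0 < T" "T < 1"
  shows "(I_powr_deriv \<sigma> has_real_derivative I_powr_curv (ln T) (T powr \<sigma>) / (2 * T\<^sup>2)) (at T)"
proof -
  let ?u = "T powr \<sigma>"
  have u: "0 < ?u" "?u < 1"
    using assms by (simp_all add: powr01_less_one)
  have "((\<lambda>u. u * logit u / 2) has_real_derivative (1 * logit ?u + (1/?u + 1/(1 - ?u)) * ?u) / 2) (at ?u)"
    by (intro DERIV_cdivide DERIV_mult DERIV_ident has_real_derivative_logit u)
  moreover have "(1/?u + 1/(1 - ?u)) * ?u = 1 / (1 - ?u)"
    using u by (simp add: field_simps)
  ultimately have "((\<lambda>u. u * logit u / 2) has_real_derivative (logit ?u + 1 / (1 - ?u)) / 2) (at ?u)"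
    by simp
  from DERIV_chain2[OF this has_real_derivative_powr[of T \<sigma>]]
  have "((\<lambda>T. T powr \<sigma> * logit (T powr \<sigma>) / 2) has_real_derivative
      (logit ?u + 1 / (1 - ?u)) / 2 * (\<sigma> * T powr (\<sigma> - 1))) (at T)"
    using assms by simp
  from DERIV_divide[OF this DERIV_ident]
  have deriv: "((\<lambda>T. T powr \<sigma> * logit (T powr \<sigma>) / 2 / T) has_real_derivative
      ((logit ?u + 1 / (1 - ?u)) / 2 * (\<sigma> * T powr (\<sigma> - 1)) * T - ?u * logit ?u / 2 * 1) / (T * T))
      (at T)"
    using assms by simp
  have "(\<lambda>T. T powr \<sigma> * logit (T powr \<sigma>) / 2 / T) = I_powr_deriv \<sigma>"
    by (simp add: I_powr_deriv_def fun_eq_iff)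
  moreover have curv: "I_powr_curv (ln T) ?u = \<sigma> * ?u * (logit ?u + 1 / (1 - ?u)) - ?u * logit ?u"
    using assms by (simp add: I_powr_curv_def ln_powr)
  have "T powr (\<sigma> - 1) = ?u / T"
    using assms by (simp add: powr_diff)
  then have alg: "A / 2 * (\<sigma> * T powr (\<sigma> - 1)) * T - ?u * logit ?u / 2 * 1
      = (\<sigma> * ?u * A - ?u * logit ?u) / 2" for A
    using assms by (simp add: field_simps)
  have "((logit ?u + 1 / (1 - ?u)) / 2 * (\<sigma> * T powr (\<sigma> - 1)) * T - ?u * logit ?u / 2 * 1) / (T * T)
      = I_powr_curv (ln T) ?u / (2 * T\<^sup>2)"
    unfolding alg curv by (simp add: power2_eq_square)
  ultimately show ?thesis
    using deriv by simp
qed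

lemma has_real_derivative_I_powr_curv:
  assumes "0 < u" "u < 1"
  shows "(I_powr_curv l has_real_derivative
    ((ln u + 1) * (logit u + 1 / (1 - u)) + ln u / (1 - u)\<^sup>2) / l - (logit u + 1 / (1 - u))) (at u)"
proof -
  have "((\<lambda>u. 1 / (1 - u)) has_real_derivative 1 / (1 - u)\<^sup>2) (at u)"
    using assms by (auto intro!: derivative_eq_intros simp: power2_eq_square divide_simps)
  then have "((\<lambda>u. logit u + 1 / (1 - u)) has_real_derivative (1/u + 1/(1 - u)) + 1 / (1 - u)\<^sup>2) (at u)"
    by (intro DERIV_add has_real_derivative_logit assms)
  then have "(I_powr_curv l has_real_derivative
      ((1 * ln u + 1/u * u) * (logit u + 1 / (1 - u))
        + ((1/u + 1/(1 - u)) + 1 / (1 - u)\<^sup>2) * (u * ln u)) / l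
      - (1 * logit u + (1/u + 1/(1 - u)) * u)) (at u)"
    unfolding I_powr_curv_def[abs_def]
    by (intro DERIV_diff DERIV_cdivide DERIV_mult DERIV_ident DERIV_ln_divide
        has_real_derivative_logit assms)
  moreover have e2: "(1/u + 1/(1 - u)) * u = 1 / (1 - u)"
    using assms by (simp add: field_simps)
  moreover have "((1/u + 1/(1 - u)) + 1 / (1 - u)\<^sup>2) * (u * ln u) = ln u / (1 - u)\<^sup>2"
  proof -
    have "((1/u + 1/(1 - u)) + 1 / (1 - u)\<^sup>2) * u = 1 / (1 - u) + u / (1 - u)\<^sup>2"
      using e2 by (simp add: distrib_right)
    also have "\<dots> = ((1 - u) + u) / (1 - u)\<^sup>2"
      using assms add_divide_distrib[of "1 - u" u "(1 - u)\<^sup>2"] by (simp add: power2_eq_square)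
    finally show ?thesis
      by (simp add: mult.assoc[symmetric])
  qed
  ultimately show ?thesis
    using assms by simp
qed

lemma I_powr_curv_deriv_neg:
  assumes "1/2 \<le> u" "u < 1" "l < 0" "l \<le> 2 * ln u"
  shows "((ln u + 1) * (logit u + 1 / (1 - u)) + ln u / (1 - u)\<^sup>2) / l - (logit u + 1 / (1 - u)) < 0"
proof -
  define A where "A = logit u + 1 / (1 - u)"
  define e where "e = 1 - u"
  define \<kappa> where "\<kappa> = - ln u"
  define m where "m = - l"
  have "0 < u" "0 < e" "0 < \<kappa>" "0 < m" "2 * \<kappa> \<le> m"
    using assms by (simp_all add: e_def \<kappa>_def m_def)
  have "0 \<le> logit u"
    using logit_nonneg_iff \<open>0 < u\<close> assms by simp
  then have "0 < A"
    using \<open>0 < e\<close> by (simp add: A_def e_def add_nonneg_pos)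
  have "\<kappa> * u < e"
  proof -
    have "ln (1 / u) < 1 / u - 1"
      using \<open>0 < u\<close> assms(2) ln_le_minus_one[of "1/u"] ln_eq_minus_one[of "1/u"] by fastforce
    then have "\<kappa> * u < (1 / u - 1) * u"
      unfolding \<kappa>_def using \<open>0 < u\<close> by (intro mult_strict_right_mono) (simp_all add: ln_div)
    moreover have "(1 / u - 1) * u = e"
      using \<open>0 < u\<close> by (simp add: e_def field_simps)
    ultimately show ?thesis
      by simp
  qed
  have A_e: "A = logit u + 1 / e"
    by (simp add: A_def e_def)
  have "(1 + \<kappa>) * A - \<kappa> / e\<^sup>2 = (1 + \<kappa>) * logit u + ((1 + \<kappa>) * e - \<kappa>) / e\<^sup>2"
    unfolding A_e using \<open>0 < e\<close> by (simp add: field_simps power2_eq_square)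
  also have "(1 + \<kappa>) * e - \<kappa> = e - \<kappa> * u"
    by (simp add: e_def algebra_simps)
  finally have "(1 + \<kappa>) * A - \<kappa> / e\<^sup>2 = (1 + \<kappa>) * logit u + (e - \<kappa> * u) / e\<^sup>2" .
  moreover have "0 \<le> (1 + \<kappa>) * logit u" "0 < (e - \<kappa> * u) / e\<^sup>2"
    using \<open>0 \<le> logit u\<close> \<open>0 < \<kappa>\<close> \<open>\<kappa> * u < e\<close> \<open>0 < e\<close> by simp_all
  moreover have "(1 + \<kappa>) * A \<le> (1 - \<kappa> + m) * A"
    using \<open>2 * \<kappa> \<le> m\<close> \<open>0 < A\<close> by (intro mult_right_mono) auto
  ultimately have "0 < (1 - \<kappa> + m) * A - \<kappa> / e\<^sup>2"
    by linarith
  moreover have "((ln u + 1) * (logit u + 1 / (1 - u)) + ln u / (1 - u)\<^sup>2) / l - (logit u + 1 / (1 - u))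
      = ((1 - \<kappa>) * A - \<kappa> / e\<^sup>2) / (- m) - A"
    by (simp add: A_def e_def \<kappa>_def m_def)
  moreover have "((1 - \<kappa>) * A - \<kappa> / e\<^sup>2) / (- m) - A = - (((1 - \<kappa> + m) * A - \<kappa> / e\<^sup>2) / m)"
    using \<open>0 < m\<close> by (simp add: field_simps)
  ultimately show ?thesis
    using \<open>0 < m\<close> by simp
qed

lemma I_powr_curv_strict_antimono:
  assumes "l < 0" "1/2 \<le> x" "x < y" "y < 1" "l \<le> 2 * ln x"
  shows "I_powr_curv l y < I_powr_curv l x"
proof (rule DERIV_neg_interior_imp_less[OF \<open>x < y\<close> has_real_derivative_I_powr_curv])
  fix t assume "x < t" "t < y"
  moreover have "ln x < ln t"
    using \<open>x < t\<close> assms(2) by simp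
  then have "l \<le> 2 * ln t"
    using assms(5) by linarith
  ultimately show "((ln t + 1) * (logit t + 1 / (1 - t)) + ln t / (1 - t)\<^sup>2) / l
      - (logit t + 1 / (1 - t)) < 0"
    using assms by (intro I_powr_curv_deriv_neg) auto
qed (use assms in auto)

lemma I_powr_deriv_diff_strict_antimono:
  assumes "0 < \<sigma>'" "\<sigma>' < \<sigma>" "\<sigma> \<le> 1/2" "0 < x" "x < y" "y < 1" "1/2 \<le> x powr \<sigma>"
  shows "I_powr_deriv \<sigma>' y - I_powr_deriv \<sigma> y < I_powr_deriv \<sigma>' x - I_powr_deriv \<sigma> x"
proof (rule DERIV_neg_interior_imp_less[OF \<open>x < y\<close> DERIV_diff])
  fix t assume t: "x \<le> t" "t \<le> y"
  then show "(I_powr_deriv \<sigma>' has_real_derivative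
      I_powr_curv (ln t) (t powr \<sigma>') / (2 * t\<^sup>2)) (at t)"
    "(I_powr_deriv \<sigma> has_real_derivative I_powr_curv (ln t) (t powr \<sigma>) / (2 * t\<^sup>2)) (at t)"
    using assms by (auto intro!: has_real_derivative_I_powr_deriv)
next
  fix t assume t: "x < t" "t < y"
  have "1/2 \<le> t powr \<sigma>"
    using assms(7) powr_mono2[of \<sigma> x t] t assms by simp
  moreover have "t powr \<sigma> < t powr \<sigma>'" "t powr \<sigma>' < 1"
    using powr_less_mono'[of t \<sigma>' \<sigma>] powr01_less_one[of t \<sigma>'] t assms by auto
  moreover have "ln t < 0" "ln t \<le> 2 * ln (t powr \<sigma>)"
    using t assms by (auto simp: ln_powr mult_le_cancel_right1 intro!: mult_left_mono_neg)
  ultimately have "I_powr_curv (ln t) (t powr \<sigma>') < I_powr_curv (ln t) (t powr \<sigma>)"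
    by (intro I_powr_curv_strict_antimono) auto
  then show "I_powr_curv (ln t) (t powr \<sigma>') / (2 * t\<^sup>2) - I_powr_curv (ln t) (t powr \<sigma>) / (2 * t\<^sup>2) < 0"
    using t assms by (simp add: divide_strict_right_mono)
qed

section \<open>Comparing two exponents\<close>

lemma obj_T_maximiser_outside:
  assumes k: "2 \<le> k" "k < k'"
    and t: "0 < t1" "t1 < t2" "t2 < 1" "1/2 \<le> t1 powr (1 / k)"
    and max_t1: "\<And>T. T \<in> {0..1} \<Longrightarrow> obj_T k \<theta> T \<le> obj_T k \<theta> t1"
    and t2_eq: "obj_T k \<theta> t2 = obj_T k \<theta> t1"
    and max_s: "\<And>T. T \<in> {0..1} \<Longrightarrow> obj_T k' \<theta>' T \<le> obj_T k' \<theta>' s"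
  shows "s < t1 \<or> t2 < s"
proof (rule ccontr)
  assume "\<not> (s < t1 \<or> t2 < s)"
  then have s: "t1 \<le> s" "s \<le> t2"
    by auto
  define E where "E T = k * (obj_T k \<theta> T - obj_T k \<theta> t1) - k' * (obj_T k' \<theta>' T - obj_T k' \<theta>' s)"
    for T
  define E' where "E' T = k * (\<theta> - I_powr_deriv (1 / k) T / k) - k' * (\<theta>' - I_powr_deriv (1 / k') T / k')"
    for T
  have deriv: "(E has_real_derivative E' T) (at T)" if "t1 \<le> T" "T \<le> t2" for T
  proof -
    have "(E has_real_derivative k * (\<theta> - I_powr_deriv (1 / k) T / k - 0)
        - k' * (\<theta>' - I_powr_deriv (1 / k') T / k' - 0)) (at T)"
      unfolding E_def[abs_def] using that t k
      by (intro DERIV_diff DERIV_cmult DERIV_const has_real_derivative_obj_T) auto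
    then show ?thesis
      by (simp add: E'_def)
  qed
  have antimono: "E' y < E' x" if "t1 \<le> x" "x < y" "y \<le> t2" for x y
  proof -
    have "1/2 \<le> x powr (1 / k)"
      using t(1,4) that(1) k powr_mono2[of "1 / k" t1 x] by simp
    then have "I_powr_deriv (1 / k') y - I_powr_deriv (1 / k) y
        < I_powr_deriv (1 / k') x - I_powr_deriv (1 / k) x"
      using that t k by (intro I_powr_deriv_diff_strict_antimono) (auto simp: divide_strict_left_mono)
    then show ?thesis
      using k by (simp add: E'_def algebra_simps)
  qed
  have "0 < E s"
  proof (rule strictly_concave_pos[OF \<open>t1 < t2\<close> deriv antimono])
    show "0 \<le> E t1" "0 \<le> E t2"
      using max_s[of t1] max_s[of t2] t2_eq t k by (simp_all add: E_def mult_nonneg_nonpos)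
    have "\<theta> - I_powr_deriv (1 / k) T / k = 0" if "T \<in> {t1, t2}" for T
      using obj_T_deriv_zero_at_max[of k T \<theta>] max_t1 t2_eq that t k by auto
    moreover have "\<theta>' - I_powr_deriv (1 / k') s / k' = 0"
      using obj_T_deriv_zero_at_max[OF _ _ _ max_s] s t k by simp
    ultimately show "s = t1 \<Longrightarrow> E' t1 = 0" "s = t2 \<Longrightarrow> E' t2 = 0"
      by (auto simp: E'_def)
  qed (use s in auto)
  moreover have "E s \<le> 0"
    using max_t1[of s] s t k by (simp add: E_def mult_nonneg_nonpos)
  ultimately show False
    by simp
qed

lemma maximiser_powr_outside:
  assumes k: "2 \<le> k" "k < k'" and "0 \<le> \<theta>"
    and u: "u1 \<in> maximisers \<theta> k" "u2 \<in> maximisers \<theta> k" "u1 < u2"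
    and v: "v \<in> maximisers \<theta>' k'"
  shows "v powr k' < u1 powr k \<or> u2 powr k < v powr k'"
proof (rule obj_T_maximiser_outside[OF k])
  have "1/2 \<le> u1" "u2 < 1"
    using maximiser_ge_half[OF \<open>0 \<le> \<theta>\<close> _ u(1)] maximiser_less_one[OF \<open>0 \<le> \<theta>\<close> _ u(2)] k by simp_all
  then show "0 < u1 powr k" "u1 powr k < u2 powr k" "u2 powr k < 1" "1/2 \<le> (u1 powr k) powr (1 / k)"
    using u(3) k powr_less_mono2[of k u1 u2] by (simp_all add: powr01_less_one powr_powr)
  show "obj_T k \<theta> T \<le> obj_T k \<theta> (u1 powr k)" if "T \<in> {0..1}" for T
    using obj_T_le_maximiser u(1) that k by simp
  show "obj_T k' \<theta>' T \<le> obj_T k' \<theta>' (v powr k')" if "T \<in> {0..1}" for T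
    using obj_T_le_maximiser v that k by simp
  have "u1 \<in> {0..1}" "u2 \<in> {0..1}"
    using u(1,2) by (simp_all add: maximisers_def)
  then have "obj \<theta> k u2 = obj \<theta> k u1"
    using maximisers_le[OF u(1)] maximisers_le[OF u(2)] by (meson order.antisym)
  then show "obj_T k \<theta> (u2 powr k) = obj_T k \<theta> (u1 powr k)"
    using \<open>u1 \<in> {0..1}\<close> \<open>u2 \<in> {0..1}\<close> k by (simp add: obj_T_powr)
qed

lemma phi_strict_antimono_k: "1/2 < u \<Longrightarrow> u < 1 \<Longrightarrow> k < k' \<Longrightarrow> phi k' u < phi k u"
  using logit_pos_iff[of u] by (simp add: phi_def algebra_simps)

lemma argmin_powr_mono:
  fixes k k' :: real
  assumes "2 < k" "k < k'"
  shows "((k - 1) / k) powr k \<le> ((k' - 1) / k') powr k'"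
proof -
  \<comment> \<open>\<open>((x - 1) / x)\<^sup>x = exp (g x)\<close> and \<open>g' x = ln (1 - 1/x) + 1/(x - 1) > 0\<close>\<close>
  define g where "g x = x * (ln (x - 1) - ln x)" for x :: real
  have "g k < g k'"
  proof (rule DERIV_pos_interior_imp_less[OF \<open>k < k'\<close>])
    show "(g has_real_derivative (ln (x - 1) - ln x) + 1 / (x - 1)) (at x)" if "k \<le> x" for x
      unfolding g_def[abs_def] using that assms
      by (auto intro!: derivative_eq_intros simp: field_simps)
    fix x assume "k < x"
    then have "ln (x / (x - 1)) < x / (x - 1) - 1"
      using assms ln_le_minus_one[of "x / (x - 1)"] ln_eq_minus_one[of "x / (x - 1)"] by fastforce
    then show "0 < (ln (x - 1) - ln x) + 1 / (x - 1)"
      using \<open>k < x\<close> assms by (simp add: ln_div field_simps)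
  qed
  moreover have "((x - 1) / x) powr x = exp (g x)" if "2 < x" for x
    using that by (simp add: powr_def g_def ln_div)
  ultimately show ?thesis
    using assms by simp
qed

lemma supercritical_lower_root_less_argmin:
  assumes "supercritical k a b" "supercritical k' a' b'" "k < k'"
  shows "a' < (k - 1) / k"
proof -
  interpret K: supercritical k a b by fact
  interpret K': supercritical k' a' b' by fact
  have "1/2 < K.argmin"
    using K.half_less_a K.a_less_argmin by linarith
  then have "phi k' K.argmin < phi k K.argmin"
    by (rule phi_strict_antimono_k[OF _ K.argmin_bounds(2) assms(3)])
  then show ?thesis
    using K'.a_less_of_phi_neg K.argmin_bounds phi_argmin_neg[OF K.k0_less] by simp
qed

lemma T1_T2_strict_mono:
  assumes "k0 < k" "k < k'"
  shows "T1 k' < T1 k \<and> T2 k < T2 k'"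
proof -
  obtain a b a' b' where S: "supercritical k a b" "supercritical k' a' b'"
    using supercritical_exists assms by (meson less_trans)
  interpret K: supercritical k a b by (fact S)
  interpret K': supercritical k' a' b' by (fact S)
  obtain u1 u2 where u: "0 \<le> theta_hat k" "maximisers (theta_hat k) k = {u1, u2}" "u1 < a" "b \<le> u2"
    "T1 k = u1 powr k" "T2 k = u2 powr k"
    by (rule K.theta_hat_maximisers)
  obtain v1 v2 where v: "0 \<le> theta_hat k'" "maximisers (theta_hat k') k' = {v1, v2}" "v1 < a'" "b' \<le> v2"
    "T1 k' = v1 powr k'" "T2 k' = v2 powr k'"
    by (rule K'.theta_hat_maximisers)
  have u1M: "u1 \<in> maximisers (theta_hat k) k" and v1M: "v1 \<in> maximisers (theta_hat k') k'"
    using u(2) v(2) by auto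
  have u1: "0 < u1" and v1: "0 < v1" "v1 < 1"
    using maximiser_pos[OF u(1) u1M] maximiser_pos[OF v(1) v1M] maximiser_less_one[OF v(1) _ v1M]
      K'.two_less_k by auto
  have "v1 < u2"
    using supercritical_lower_root_less_argmin[OF S assms(2)] v(3) u(4) K.argmin_less_b by simp
  have "v1 powr k' \<le> v1 powr k"
    using powr_mono'[of k k' v1] v1 assms(2) by simp
  also have "\<dots> < u2 powr k"
    using powr_less_mono2[of k v1 u2] \<open>v1 < u2\<close> v1 K.two_less_k by simp
  finally have "v1 powr k' < u2 powr k" .
  moreover have "u1 powr k < v2 powr k'"
  proof -
    have "u1 powr k < K.argmin powr k"
      using powr_less_mono2[of k u1 K.argmin] u(3) K.a_less_argmin u1 K.two_less_k by simp
    also have "\<dots> \<le> K'.argmin powr k'"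
      using argmin_powr_mono K.two_less_k assms(2) by simp
    also have "\<dots> < v2 powr k'"
      using powr_less_mono2[of k' K'.argmin v2] v(4) K'.argmin_less_b K'.argmin_bounds K'.two_less_k by simp
    finally show ?thesis .
  qed
  moreover have "v powr k' < u1 powr k \<or> u2 powr k < v powr k'" if "v \<in> {v1, v2}" for v
    using maximiser_powr_outside[of k k' "theta_hat k" u1 u2 v "theta_hat k'"] that u v
      K.two_less_k K.a_less_argmin K.argmin_less_b assms(2) by auto
  ultimately show ?thesis
    using u(5,6) v(5,6) by fastforce
qed

theorem lemma3p2:
  shows "(\<forall>k k'. k0 < k \<and> k < k' \<longrightarrow> T1 k' < T1 k) \<and>
         (\<forall>k k'. k0 < k \<and> k < k' \<longrightarrow> T2 k < T2 k')"
  using T1_T2_strict_mono by blast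

end
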